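(* Let $A,Y\in\{0,1\}$ and let $R,R'\in[0,1]$ be random variables on the same probability space, with $\Pr\{A=a,Y=y\}>0$ for all $a,y$. Fix $a\in\{0,1\}$. Then for any point $p$ on the $A$-conditional ROC curve $\{C_a^R(t):t\in[0,1]\}$ of $R$, there is a point $q$ on the corresponding $A$-conditional ROC curve $\{C_a^{R'}(t):t\in[0,1]\}$ of $R'$ such that $\|p-q\|_2\le\sqrt{2}\cdot d_{\mathrm{K}}(R,R')$.
   Context: For a score $S\in[0,1]$ and $a\in\{0,1\}$, the $A$-conditional ROC curve is $C_a^S(t)=\left(\Pr\{S>t\mid A=a,Y=0\},\ \Pr\{S>t\mid A=a,Y=1\}\right)$, $t\in[0,1]$. The conditional Kolmogorov distance is $d_{\mathrm{K}}(R,R')=\max_{a,y\in\{0,1\}}\sup_{t\in[0,1]}\left|\Pr\{R>t\mid A=a,Y=y\}-\Pr\{R'>t\mid A=a,Y=y\}\right|$. *)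

theory Defs
  imports "HOL-Probability.Probability"
begin

definition cond_surv ::
  "'w measure \<Rightarrow> ('w \<Rightarrow> nat) \<Rightarrow> ('w \<Rightarrow> nat) \<Rightarrow> ('w \<Rightarrow> real) \<Rightarrow> nat \<Rightarrow> nat \<Rightarrow> real \<Rightarrow> real" where
  "cond_surv M A Y S a y t =
     measure M {w \<in> space M. S w > t \<and> A w = a \<and> Y w = y} /
     measure M {w \<in> space M. A w = a \<and> Y w = y}"

definition cond_roc ::
  "'w measure \<Rightarrow> ('w \<Rightarrow> nat) \<Rightarrow> ('w \<Rightarrow> nat) \<Rightarrow> ('w \<Rightarrow> real) \<Rightarrow> nat \<Rightarrow> real \<Rightarrow> real \<times> real" where
  "cond_roc M A Y S a t = (cond_surv M A Y S a 0 t, cond_surv M A Y S a 1 t)"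

definition cond_kolmogorov ::
  "'w measure \<Rightarrow> ('w \<Rightarrow> nat) \<Rightarrow> ('w \<Rightarrow> nat) \<Rightarrow> ('w \<Rightarrow> real) \<Rightarrow> ('w \<Rightarrow> real) \<Rightarrow> real" where
  "cond_kolmogorov M A Y R R' =
     Sup {\<bar>cond_surv M A Y R a y t - cond_surv M A Y R' a y t\<bar> | a y t.
            a \<in> {0,1} \<and> y \<in> {0,1} \<and> t \<in> {0..1}}"

end

theory Submission
  imports Defs
begin

text \<open>The point of the ROC curve of \<open>R'\<close> at the same threshold \<open>t\<close> works: each coordinate
  differs by a conditional survival difference at \<open>t\<close>, which is bounded by the conditional
  Kolmogorov distance, and two coordinates contribute the factor \<open>sqrt 2\<close>.\<close>

lemma dist_Pair_le_sqrt2: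
  fixes x x' y y' :: real
  assumes "\<bar>x - x'\<bar> \<le> d" and "\<bar>y - y'\<bar> \<le> d"
  shows "dist (x, y) (x', y') \<le> sqrt 2 * d"
proof -
  have d: "0 \<le> d" using assms(1) by linarith
  have "(x - x')\<^sup>2 \<le> d\<^sup>2" "(y - y')\<^sup>2 \<le> d\<^sup>2"
    using assms abs_le_square_iff d by (metis abs_of_nonneg)+
  then have "sqrt ((x - x')\<^sup>2 + (y - y')\<^sup>2) \<le> sqrt (2 * d\<^sup>2)" by simp
  also have "\<dots> = sqrt 2 * d" using d by (simp add: real_sqrt_mult)
  finally show ?thesis by (simp add: dist_Pair_Pair dist_real_def)
qed

lemma cond_surv_bounds:
  assumes "prob_space M"
    and "A \<in> measurable M (count_space UNIV)" and "Y \<in> measurable M (count_space UNIV)"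
  shows "0 \<le> cond_surv M A Y S a y t \<and> cond_surv M A Y S a y t \<le> 1"
proof -
  interpret prob_space M by fact
  have "{w \<in> space M. A w = a \<and> Y w = y} \<in> sets M"
    using assms(2,3) by measurable
  then have "measure M {w \<in> space M. S w > t \<and> A w = a \<and> Y w = y}
      \<le> measure M {w \<in> space M. A w = a \<and> Y w = y}"
    by (intro finite_measure_mono) auto
  then show ?thesis unfolding cond_surv_def
    by (cases "measure M {w \<in> space M. A w = a \<and> Y w = y} = 0")
      (auto simp: divide_le_eq_1 zero_less_measure_iff)
qed

text \<open>The supremum in \<open>cond_kolmogorov\<close> is a real \<open>Sup\<close>, so it bounds its elements only because
  survival probabilities lie in \<open>[0,1]\<close> and hence the set is bounded above.\<close>

lemma cond_surv_diff_le_cond_kolmogorov: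
  assumes "prob_space M"
    and "A \<in> measurable M (count_space UNIV)" and "Y \<in> measurable M (count_space UNIV)"
    and "a \<in> {0,1}" and "y \<in> {0,1}" and "t \<in> {0..1}"
  shows "\<bar>cond_surv M A Y R a y t - cond_surv M A Y R' a y t\<bar> \<le> cond_kolmogorov M A Y R R'"
  unfolding cond_kolmogorov_def
proof (rule cSup_upper)
  show "bdd_above {\<bar>cond_surv M A Y R a y t - cond_surv M A Y R' a y t\<bar> | a y t.
      a \<in> {0,1} \<and> y \<in> {0,1} \<and> t \<in> {0..1}}"
  proof (rule bdd_aboveI[of _ 1])
    fix x assume "x \<in> {\<bar>cond_surv M A Y R a y t - cond_surv M A Y R' a y t\<bar> | a y t.
      a \<in> {0,1} \<and> y \<in> {0,1} \<and> t \<in> {0..1}}"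
    then obtain a y t where "x = \<bar>cond_surv M A Y R a y t - cond_surv M A Y R' a y t\<bar>"
      by blast
    with cond_surv_bounds[OF assms(1-3), of R a y t] cond_surv_bounds[OF assms(1-3), of R' a y t]
    show "x \<le> 1" by auto
  qed
qed (use assms(4-6) in blast)

theorem lemma5p5:
  fixes M :: "'w measure" and A Y :: "'w \<Rightarrow> nat" and R R' :: "'w \<Rightarrow> real"
    and a :: nat and p :: "real \<times> real"
  assumes "prob_space M"
    and "A \<in> measurable M (count_space UNIV)" and "Y \<in> measurable M (count_space UNIV)"
    and "R \<in> borel_measurable M" and "R' \<in> borel_measurable M"
    and "\<forall>w\<in>space M. A w \<in> {0,1} \<and> Y w \<in> {0,1}"
    and "\<forall>w\<in>space M. R w \<in> {0..1} \<and> R' w \<in> {0..1}"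
    and "\<forall>a'\<in>{0,1}. \<forall>y\<in>{0,1}. measure M {w \<in> space M. A w = a' \<and> Y w = y} > 0"
    and "a \<in> {0,1}"
    and "p \<in> cond_roc M A Y R a ` {0..1}"
  shows "\<exists>q \<in> cond_roc M A Y R' a ` {0..1}.
           dist p q \<le> sqrt 2 * cond_kolmogorov M A Y R R'"
proof -
  obtain t where t: "t \<in> {0..1}" and p: "p = cond_roc M A Y R a t"
    using assms(10) by blast
  have "dist p (cond_roc M A Y R' a t) \<le> sqrt 2 * cond_kolmogorov M A Y R R'"
    unfolding p cond_roc_def
    by (intro dist_Pair_le_sqrt2 cond_surv_diff_le_cond_kolmogorov) (use assms(1-3,9) t in auto)
  then show ?thesis using t by blast
qed

end
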